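(* Let $p,q\in\mathbb R^3$ with $|p|\ge\frac32q^0$. Then for any multi-index $\beta\in\mathbb N^3\setminus\{0\}$ (derivatives $\partial_\beta$ in $p$), $$|\partial_\beta g|\lesssim\langle q\rangle^{|\beta|},\qquad \Big|\partial_\beta\Big(\frac1g\Big)\Big|\lesssim\frac{\langle q\rangle^{|\beta|}}{g^2},$$ and $$|\partial_\beta\sqrt{\mathfrak s}|\lesssim\langle q\rangle^{|\beta|},\qquad \Big|\partial_\beta\Big(\frac1{\sqrt{\mathfrak s}}\Big)\Big|\lesssim\frac{\langle q\rangle^{|\beta|}}{g^2}.$$
   Context: $\mathfrak c\ge1$ is the speed of light; $p^0=\sqrt{\mathfrak c^2+|p|^2}$, $q^0=\sqrt{\mathfrak c^2+|q|^2}$, $\langle q\rangle=\sqrt{1+|q|^2}$; $\mathfrak s=2(p^0q^0-p\cdot q+\mathfrak c^2)$, $g=\sqrt{2(p^0q^0-p\cdot q-\mathfrak c^2)}$. Implicit constants are independent of $\mathfrak c$, $p$, $q$. *)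

theory Defs
  imports "HOL-Analysis.Analysis"
begin

text \<open>Relativistic quantities; c is the speed of light, momenta in R^3.\<close>

definition en :: "real \<Rightarrow> real^3 \<Rightarrow> real" where
  "en c p = sqrt (c\<^sup>2 + (norm p)\<^sup>2)"

definition jbr :: "real^3 \<Rightarrow> real" where
  "jbr q = sqrt (1 + (norm q)\<^sup>2)"

definition mand_s :: "real \<Rightarrow> real^3 \<Rightarrow> real^3 \<Rightarrow> real" where
  "mand_s c p q = 2 * (en c p * en c q - p \<bullet> q + c\<^sup>2)"

definition mand_g :: "real \<Rightarrow> real^3 \<Rightarrow> real^3 \<Rightarrow> real" where
  "mand_g c p q = sqrt (2 * (en c p * en c q - p \<bullet> q - c\<^sup>2))"

definition dpart :: "3 \<Rightarrow> (real^3 \<Rightarrow> real) \<Rightarrow> (real^3 \<Rightarrow> real)" where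
  "dpart i f = (\<lambda>x. deriv (\<lambda>t. f (x + t *\<^sub>R axis i 1)) 0)"

definition pD :: "nat^3 \<Rightarrow> (real^3 \<Rightarrow> real) \<Rightarrow> (real^3 \<Rightarrow> real)" where
  "pD \<beta> f = (dpart 1 ^^ (\<beta>$1)) ((dpart 2 ^^ (\<beta>$2)) ((dpart 3 ^^ (\<beta>$3)) f))"

definition mi_abs :: "nat^3 \<Rightarrow> nat" where
  "mi_abs \<beta> = (\<Sum>i\<in>UNIV. \<beta>$i)"

end

theory Submission
  imports Defs
begin

(*
  Write G = p0 q0 - p.q + d, so that g^2 = 2 G for d = -c^2 and s = 2 G for d = c^2.
  By the product rule, every p-derivative of G^a is a finite sum of monomials
  f(c,q) G^a' p^n / p0^m with |f(c,q)| <~ q0^nq, and each differentiation changes the weight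
  E = nq + |n| - m by one while 2 a' + E = 2 a - |beta| (homogeneity), |n| <= m and, after the
  first derivative, a' <= a - 1. For |p| >= 3/2 q0 and d >= -c^2 one has G >= c^2/50,
  |p_i| <= p0 and q0 <= p0, so a monomial is O(c^(2 a') q0^E); since c <= q0 <= c <q>,
  this is O(<q>^|beta|) as soon as 2 a' + E <= 0. The exponents a = 1/2 and a = -1/2
  (the latter multiplied by g^2) give the four estimates.
*)

section \<open>Energies and the Minkowski product\<close>

lemma norm_add_axis_power2:
  fixes p :: "real^'n"
  shows "(norm (p + t *\<^sub>R axis j 1))\<^sup>2 = (norm p)\<^sup>2 + 2 * t * p$j + t\<^sup>2"
proof -
  have "(p + t *\<^sub>R axis j 1) \<bullet> (p + t *\<^sub>R axis j 1) = p \<bullet> p + 2 * t * p$j + t\<^sup>2"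
    by (simp add: inner_add_right inner_axis inner_axis' inner_axis_axis algebra_simps
        power2_eq_square)
  then show ?thesis
    by (simp add: power2_norm_eq_inner)
qed

lemma inner_add_axis_left:
  fixes p q :: "real^'n"
  shows "(p + t *\<^sub>R axis j 1) \<bullet> q = p \<bullet> q + t * q$j"
  by (simp add: inner_add_left inner_axis')

lemma en_pos: "c \<noteq> 0 \<Longrightarrow> 0 < en c p"
  unfolding en_def by (simp add: add_pos_nonneg)

lemma norm_le_en: "norm p \<le> en c p"
  unfolding en_def by (rule real_le_rsqrt) simp

lemma abs_le_en: "\<bar>c\<bar> \<le> en c p"
  unfolding en_def by (rule real_le_rsqrt) simp

lemma abs_component_le_en: "\<bar>p$i\<bar> \<le> en c p"
  using component_le_norm_cart norm_le_en order_trans by blast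

lemma en_power2: "(en c p)\<^sup>2 = c\<^sup>2 + (norm p)\<^sup>2"
  unfolding en_def by simp

lemma jbr_ge_1: "1 \<le> jbr q"
  unfolding jbr_def by simp

lemma en_le_mult_jbr:
  assumes "1 \<le> c"
  shows "en c q \<le> c * jbr q"
proof -
  have "1 \<le> c\<^sup>2"
    using assms by (simp add: one_le_power)
  then have "c\<^sup>2 + (norm q)\<^sup>2 \<le> c\<^sup>2 * (1 + (norm q)\<^sup>2)"
    using mult_right_mono[of 1 "c\<^sup>2" "(norm q)\<^sup>2"] by (simp add: algebra_simps)
  then have "en c q \<le> sqrt (c\<^sup>2 * (1 + (norm q)\<^sup>2))"
    unfolding en_def by (rule real_sqrt_le_mono)
  then show ?thesis
    using assms by (simp add: jbr_def real_sqrt_mult)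
qed

lemma has_real_derivative_en_axis:
  assumes "c \<noteq> 0"
  shows "((\<lambda>t. en c (p + t *\<^sub>R axis j 1)) has_real_derivative p$j / en c p) (at 0)"
proof -
  have pos: "0 < c\<^sup>2 + (norm p)\<^sup>2"
    using assms by (simp add: add_pos_nonneg)
  have "((\<lambda>t. sqrt (c\<^sup>2 + ((norm p)\<^sup>2 + 2 * t * p$j + t\<^sup>2))) has_real_derivative
      inverse (sqrt (c\<^sup>2 + (norm p)\<^sup>2)) / 2 * (2 * p$j)) (at 0)"
    by (rule DERIV_chain2[where f = sqrt]) (use DERIV_real_sqrt[OF pos] in
        \<open>auto intro!: derivative_eq_intros\<close>)
  then show ?thesis
    unfolding en_def norm_add_axis_power2 by (simp add: field_simps)
qed

lemma has_real_derivative_inverse_en_power_axis: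
  assumes "c \<noteq> 0"
  shows "((\<lambda>t. (1 / en c (p + t *\<^sub>R axis j 1)) ^ m) has_real_derivative
           - real m * p$j / en c p ^ (m + 2)) (at 0)"
proof -
  have e: "0 < en c p"
    using en_pos[OF assms] .
  have "((\<lambda>t. (1 / en c (p + t *\<^sub>R axis j 1)) ^ m) has_real_derivative
      real m * (1 / en c p) ^ (m - 1) * (- (p$j / en c p) / (en c p)\<^sup>2)) (at 0)"
    using e by (auto intro!: derivative_eq_intros has_real_derivative_en_axis[OF assms]
        simp: power2_eq_square)
  moreover have "real m * (1 / en c p) ^ (m - 1) * (- (p$j / en c p) / (en c p)\<^sup>2)
      = - real m * p$j / en c p ^ (m + 2)"
    using e by (cases m) (simp_all add: field_simps power2_eq_square)
  ultimately show ?thesis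
    by simp
qed

definition mink :: "real \<Rightarrow> real^3 \<Rightarrow> real^3 \<Rightarrow> real" where
  "mink c p q = en c p * en c q - p \<bullet> q"

lemma mand_s_eq_mink: "mand_s c p q = 2 * (mink c p q + c\<^sup>2)"
  unfolding mand_s_def mink_def ..

(* Written with the shift d = - c^2 of the general expression mink c p q + d. *)
lemma mand_g_eq_mink: "mand_g c p q = sqrt (2 * (mink c p q + - c\<^sup>2))"
  unfolding mand_g_def mink_def by simp

lemma mand_g_power2:
  assumes "c\<^sup>2 \<le> mink c p q"
  shows "(mand_g c p q)\<^sup>2 = 2 * (mink c p q - c\<^sup>2)"
  using assms by (simp add: mand_g_eq_mink)

lemma has_real_derivative_mink_axis:
  assumes "c \<noteq> 0"
  shows "((\<lambda>t. mink c (p + t *\<^sub>R axis j 1) q) has_real_derivative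
           en c q * (p$j / en c p) - q$j) (at 0)"
  unfolding mink_def inner_add_axis_left
  by (auto intro!: derivative_eq_intros has_real_derivative_en_axis[OF assms])

lemma open_mink_gt: "open {x. a < mink c x q + d}"
proof -
  have "continuous_on UNIV (\<lambda>x. mink c x q + d)"
    unfolding mink_def en_def by (intro continuous_intros)
  then show ?thesis
    by (rule open_Collect_less[OF continuous_on_const])
qed

lemma power2_mult_add_le_prod_sums_sq:
  fixes P Q c :: real
  assumes "0 \<le> P" "0 \<le> Q" "9/4 * (c\<^sup>2 + Q\<^sup>2) \<le> P\<^sup>2"
  shows "(P * Q + 51/50 * c\<^sup>2)\<^sup>2 \<le> (c\<^sup>2 + P\<^sup>2) * (c\<^sup>2 + Q\<^sup>2)"
proof -
  have "(3/2 * Q)\<^sup>2 \<le> P\<^sup>2"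
    using assms(3) unfolding power_mult_distrib distrib_left
    by (simp add: power_divide) (use zero_le_power2[of c] in linarith)
  then obtain r where r: "P = 3/2 * Q + r" "0 \<le> r"
    using assms(1) power2_le_imp_le by (metis add.commute diff_add_cancel diff_ge_0_iff_ge)
  have P2: "P\<^sup>2 = r * r + 3 * (r * Q) + 9/4 * (Q * Q)" and PQ: "P * Q = r * Q + 3/2 * (Q * Q)"
    unfolding r(1) by (simp_all add: power2_eq_square algebra_simps)
  have "9 * c\<^sup>2 \<le> 4 * (r * r) + 12 * (r * Q)"
    using assms(3) unfolding P2 by (simp add: power2_eq_square algebra_simps)
  moreover have "0 \<le> r * r" "0 \<le> r * Q" "0 \<le> Q * Q"
    using r(2) assms(2) by simp_all
  ultimately have "404/10000 * c\<^sup>2 \<le> P\<^sup>2 + Q\<^sup>2 - 204/100 * (P * Q)"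
    unfolding P2 PQ power2_eq_square[of Q] by (simp only: ring_distribs)
  then have "0 \<le> c\<^sup>2 * (P\<^sup>2 + Q\<^sup>2 - 204/100 * P * Q - 404/10000 * c\<^sup>2)"
    by simp
  also have "\<dots> = (c\<^sup>2 + P\<^sup>2) * (c\<^sup>2 + Q\<^sup>2) - (P * Q + 51/50 * c\<^sup>2)\<^sup>2"
    by (simp add: power2_eq_square algebra_simps)
  finally show ?thesis
    by simp
qed

lemma mink_lower_bound:
  assumes "3/2 * en c q \<le> norm p"
  shows "51/50 * c\<^sup>2 \<le> mink c p q"
proof -
  have "(3/2 * en c q)\<^sup>2 \<le> (norm p)\<^sup>2"
    using assms abs_le_en[of c q] by (intro power_mono) auto
  then have "9/4 * (c\<^sup>2 + (norm q)\<^sup>2) \<le> (norm p)\<^sup>2"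
    unfolding power_mult_distrib en_power2 by (simp add: power_divide)
  then have "(norm p * norm q + 51/50 * c\<^sup>2)\<^sup>2 \<le> (en c p * en c q)\<^sup>2"
    using power2_mult_add_le_prod_sums_sq[of "norm p" "norm q" c] by (simp add: en_power2 power_mult_distrib)
  then have "norm p * norm q + 51/50 * c\<^sup>2 \<le> en c p * en c q"
    by (rule power2_le_imp_le) (simp add: en_def)
  then show ?thesis
    using norm_cauchy_schwarz[of p q] unfolding mink_def by linarith
qed

lemma mink_sub_c2_pos:
  assumes "c \<noteq> 0" "3/2 * en c q \<le> norm p"
  shows "0 < mink c p q - c\<^sup>2"
  using mink_lower_bound[OF assms(2)] zero_less_power2[of c] assms(1) by linarith

lemma dpart_cong_open:
  assumes "open S" "x \<in> S" "\<forall>y\<in>S. f y = g y"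
  shows "dpart i f x = dpart i g x"
proof -
  obtain r where r: "0 < r" "ball x r \<subseteq> S"
    using assms(1,2) openE by blast
  have "\<forall>t. dist t 0 < r \<longrightarrow> f (x + t *\<^sub>R axis i 1) = g (x + t *\<^sub>R axis i 1)"
    using r assms(3) by (auto simp: dist_norm subset_iff)
  then have "eventually (\<lambda>t. f (x + t *\<^sub>R axis i 1) = g (x + t *\<^sub>R axis i 1)) (nhds 0)"
    unfolding eventually_nhds_metric using r(1) by blast
  then show ?thesis
    unfolding dpart_def by (rule deriv_cong_ev) simp
qed

lemma dpart_iter_cong_open:
  assumes "open S" "\<forall>y\<in>S. f y = g y"
  shows "\<forall>y\<in>S. (dpart i ^^ n) f y = (dpart i ^^ n) g y"
  by (induction n) (auto intro: dpart_cong_open[OF assms(1)] simp: assms(2))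

lemma pD_cong_open:
  assumes "open S" "x \<in> S" "\<forall>y\<in>S. f y = g y"
  shows "pD \<beta> f x = pD \<beta> g x"
  using assms(2) dpart_iter_cong_open[OF assms(1) dpart_iter_cong_open[OF assms(1)
      dpart_iter_cong_open[OF assms(1,3)]]]
  unfolding pD_def by blast

section \<open>Monomials and their derivatives\<close>

definition pmon :: "('n::finite \<Rightarrow> nat) \<Rightarrow> real^'n \<Rightarrow> real" where
  "pmon n x = (\<Prod>i\<in>UNIV. x$i ^ n i)"

lemma pmon_fun_upd: "pmon (n(j := v)) x = x$j ^ v * (\<Prod>i\<in>UNIV-{j}. x$i ^ n i)"
  unfolding pmon_def by (simp add: prod.remove[of UNIV j])

lemma pmon_add_axis:
  "pmon n (x + t *\<^sub>R axis j 1) = (x$j + t) ^ n j * (\<Prod>i\<in>UNIV-{j}. x$i ^ n i)"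
  unfolding pmon_def by (simp add: prod.remove[of UNIV j] axis_def)

lemma pmon_Suc: "pmon (n(j := Suc (n j))) x = x$j * pmon n x"
  using pmon_fun_upd[of n j "n j" x] by (simp add: pmon_fun_upd)

lemma has_real_derivative_pmon_axis:
  "((\<lambda>t. pmon n (x + t *\<^sub>R axis j 1)) has_real_derivative
     real (n j) * pmon (n(j := n j - 1)) x) (at 0)"
  unfolding pmon_add_axis pmon_fun_upd by (auto intro!: derivative_eq_intros)

lemma abs_pmon_le: "\<bar>pmon n x\<bar> \<le> norm x ^ (\<Sum>i\<in>UNIV. n i)"
proof -
  have "\<bar>pmon n x\<bar> = (\<Prod>i\<in>UNIV. \<bar>x$i\<bar> ^ n i)"
    unfolding pmon_def by (simp add: abs_prod power_abs)
  also have "\<dots> \<le> (\<Prod>i\<in>UNIV. norm x ^ n i)"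
    by (intro prod_mono conjI power_mono component_le_norm_cart) auto
  finally show ?thesis
    by (simp add: power_sum)
qed

(* Monomial f nq a m n stands for p |-> f c q * (mink c p q + d) powr a * p^n / en c p ^ m;
   nq is the degree in en c q that the coefficient f is allowed to have. *)
datatype monomial = Monomial
  (mon_coeff: "real \<Rightarrow> real^3 \<Rightarrow> real")
  (mon_qdeg: nat)
  (mon_exp: real)
  (mon_endeg: nat)
  (mon_pdeg: "3 \<Rightarrow> nat")

definition mon_eval :: "real \<Rightarrow> real \<Rightarrow> real^3 \<Rightarrow> monomial \<Rightarrow> real^3 \<Rightarrow> real" where
  "mon_eval c d q M p = mon_coeff M c q * (mink c p q + d) powr mon_exp M
     * pmon (mon_pdeg M) p / en c p ^ mon_endeg M"

(* Product rule, with d/dp_j (mink + d) = en c q * p_j / en c p - q_j and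
   d/dp_j (en c p)^-m = - m p_j (en c p)^(-m-2). Terms with a vanishing factor m or n j are
   dropped: keeping them would break the invariant mon_balanced. *)
fun mon_deriv :: "3 \<Rightarrow> monomial \<Rightarrow> monomial list" where
  "mon_deriv j (Monomial f nq a m n) =
     [Monomial (\<lambda>c q. a * f c q * en c q) (Suc nq) (a - 1) (Suc m) (n(j := Suc (n j))),
      Monomial (\<lambda>c q. - a * f c q * q$j) (Suc nq) (a - 1) m n]
   @ (if m = 0 then [] else [Monomial (\<lambda>c q. - real m * f c q) nq a (m + 2) (n(j := Suc (n j)))])
   @ (if n j = 0 then [] else [Monomial (\<lambda>c q. real (n j) * f c q) nq a m (n(j := n j - 1))])"

lemma mon_deriv_cases:
  assumes "M' \<in> set (mon_deriv j (Monomial f nq a m n))"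
  obtains "M' = Monomial (\<lambda>c q. a * f c q * en c q) (Suc nq) (a - 1) (Suc m) (n(j := Suc (n j)))"
  | "M' = Monomial (\<lambda>c q. - a * f c q * q$j) (Suc nq) (a - 1) m n"
  | "m \<noteq> 0" "M' = Monomial (\<lambda>c q. - real m * f c q) nq a (m + 2) (n(j := Suc (n j)))"
  | "n j \<noteq> 0" "M' = Monomial (\<lambda>c q. real (n j) * f c q) nq a m (n(j := n j - 1))"
  using assms by (auto split: if_splits)

definition poly_eval :: "real \<Rightarrow> real \<Rightarrow> real^3 \<Rightarrow> monomial list \<Rightarrow> real^3 \<Rightarrow> real" where
  "poly_eval c d q L p = (\<Sum>M\<leftarrow>L. mon_eval c d q M p)"

definition poly_deriv :: "3 \<Rightarrow> monomial list \<Rightarrow> monomial list" where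
  "poly_deriv j L = concat (map (mon_deriv j) L)"

lemma has_real_derivative_mon_eval:
  assumes c: "c \<noteq> 0" and pos: "0 < mink c p q + d"
  shows "((\<lambda>t. mon_eval c d q M (p + t *\<^sub>R axis j 1)) has_real_derivative
           poly_eval c d q (mon_deriv j M) p) (at 0)"
proof (cases M)
  case (Monomial f nq a m n)
  define G where "G = mink c p q + d"
  define e where "e = en c p"
  define P where "P = pmon n p"
  have e: "0 < e"
    using en_pos[OF c] by (simp add: e_def)
  have dmink: "((\<lambda>t. mink c (p + t *\<^sub>R axis j 1) q + d) has_real_derivative
      en c q * (p$j / e) - q$j) (at 0)"
    using has_real_derivative_mink_axis[OF c] by (auto intro!: derivative_eq_intros simp: e_def)
  have dG: "((\<lambda>t. (mink c (p + t *\<^sub>R axis j 1) q + d) powr a) has_real_derivative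
      a * G powr (a - 1) * (en c q * (p$j / e) - q$j)) (at 0)"
    using DERIV_fun_powr[OF dmink, of a] pos by (simp add: G_def)
  note dW = has_real_derivative_inverse_en_power_axis[OF c, of p j m, folded e_def]
  have "((\<lambda>t. f c q * ((mink c (p + t *\<^sub>R axis j 1) q + d) powr a
        * (1 / en c (p + t *\<^sub>R axis j 1)) ^ m * pmon n (p + t *\<^sub>R axis j 1)))
      has_real_derivative f c q * ((a * G powr (a - 1) * (en c q * (p$j / e) - q$j) * (1 / e) ^ m
        + G powr a * (- real m * p$j / e ^ (m + 2))) * P
        + G powr a * (1 / e) ^ m * (real (n j) * pmon (n(j := n j - 1)) p))) (at 0)"
    by (rule DERIV_cong[OF DERIV_cmult[OF DERIV_mult[OF DERIV_mult[OF dG dW]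
          has_real_derivative_pmon_axis]]]) (simp add: G_def e_def P_def)
  moreover have "poly_eval c d q (mon_deriv j M) p =
        a * f c q * en c q * G powr (a - 1) * (p$j * P) / e ^ Suc m
      - a * f c q * q$j * G powr (a - 1) * P / e ^ m
      - real m * f c q * G powr a * (p$j * P) / e ^ (m + 2)
      + real (n j) * f c q * G powr a * pmon (n(j := n j - 1)) p / e ^ m"
    using pmon_Suc[of n j p] unfolding Monomial
    by (cases "n j = 0") (simp_all add: poly_eval_def mon_eval_def G_def e_def P_def)
  moreover have "f c q * ((a * G powr (a - 1) * (en c q * (p$j / e) - q$j) * (1 / e) ^ m
        + G powr a * (- real m * p$j / e ^ (m + 2))) * P
        + G powr a * (1 / e) ^ m * (real (n j) * pmon (n(j := n j - 1)) p))
      = a * f c q * en c q * G powr (a - 1) * (p$j * P) / e ^ Suc m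
      - a * f c q * q$j * G powr (a - 1) * P / e ^ m
      - real m * f c q * G powr a * (p$j * P) / e ^ (m + 2)
      + real (n j) * f c q * G powr a * pmon (n(j := n j - 1)) p / e ^ m"
    using e by (simp add: power_one_over field_simps)
  ultimately show ?thesis
    unfolding Monomial by (simp add: mon_eval_def power_one_over mult.assoc)
qed

lemma has_real_derivative_poly_eval:
  assumes "c \<noteq> 0" and "0 < mink c p q + d"
  shows "((\<lambda>t. poly_eval c d q L (p + t *\<^sub>R axis j 1)) has_real_derivative
           poly_eval c d q (poly_deriv j L) p) (at 0)"
proof (induction L)
  case Nil
  then show ?case
    by (simp add: poly_eval_def poly_deriv_def)
next
  case (Cons M L)
  then show ?case
    using DERIV_add[OF has_real_derivative_mon_eval[OF assms] Cons.IH]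
    by (simp add: poly_eval_def poly_deriv_def)
qed

lemma dpart_iter_poly_eval:
  assumes "c \<noteq> 0" and "\<forall>y\<in>{y. 0 < mink c y q + d}. f y = poly_eval c d q L y"
  shows "\<forall>y\<in>{y. 0 < mink c y q + d}.
           (dpart j ^^ n) f y = poly_eval c d q ((poly_deriv j ^^ n) L) y"
proof (induction n)
  case 0
  then show ?case
    using assms(2) by simp
next
  case (Suc n)
  show ?case
  proof
    fix y assume y: "y \<in> {y. 0 < mink c y q + d}"
    have "(dpart j ^^ Suc n) f y = dpart j (poly_eval c d q ((poly_deriv j ^^ n) L)) y"
      using dpart_cong_open[OF open_mink_gt y Suc.IH] by simp
    also have "\<dots> = poly_eval c d q ((poly_deriv j ^^ Suc n) L) y"
      using y unfolding dpart_def
      by (simp add: DERIV_imp_deriv[OF has_real_derivative_poly_eval[OF assms(1)]])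
    finally show "(dpart j ^^ Suc n) f y = poly_eval c d q ((poly_deriv j ^^ Suc n) L) y" .
  qed
qed

definition poly_pD :: "nat^3 \<Rightarrow> monomial list \<Rightarrow> monomial list" where
  "poly_pD \<beta> L = (poly_deriv 1 ^^ \<beta>$1) ((poly_deriv 2 ^^ \<beta>$2) ((poly_deriv 3 ^^ \<beta>$3) L))"

lemma pD_poly_eval:
  assumes "c \<noteq> 0" and "0 < mink c p q + d"
  shows "pD \<beta> (poly_eval c d q L) p = poly_eval c d q (poly_pD \<beta> L) p"
  using assms(2) dpart_iter_poly_eval[OF assms(1) dpart_iter_poly_eval[OF assms(1)
      dpart_iter_poly_eval[OF assms(1)]]]
  unfolding pD_def poly_pD_def by simp

section \<open>Admissible monomials\<close>

lemma sum_fun_upd_UNIV: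
  fixes n :: "'a::finite \<Rightarrow> 'b::comm_monoid_add"
  shows "(\<Sum>i\<in>UNIV. (n(j := v)) i) + n j = (\<Sum>i\<in>UNIV. n i) + v"
proof -
  have "(\<Sum>i\<in>UNIV. (n(j := v)) i) = v + (\<Sum>i\<in>UNIV-{j}. n i)"
    by (simp add: sum.remove[of UNIV j])
  moreover have "(\<Sum>i\<in>UNIV. n i) = n j + (\<Sum>i\<in>UNIV-{j}. n i)"
    by (simp add: sum.remove[of UNIV j])
  ultimately show ?thesis
    by (simp add: ac_simps)
qed

(* Bounding p_i and en c q by en c p, a monomial is O(en c q ^ mon_weight) apart from its
   Gram factor. *)
definition mon_weight :: "monomial \<Rightarrow> real" where
  "mon_weight M = real (mon_qdeg M) + real (\<Sum>i\<in>UNIV. mon_pdeg M i) - real (mon_endeg M)"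

definition mon_coeff_bounded :: "monomial \<Rightarrow> bool" where
  "mon_coeff_bounded M \<longleftrightarrow>
     (\<exists>\<kappa>\<ge>0. \<forall>c q. \<bar>mon_coeff M c q\<bar> \<le> \<kappa> * en c q ^ mon_qdeg M)"

(* Invariant after k derivatives of (mink + d) powr a0; its equation expresses homogeneity. *)
definition mon_balanced :: "real \<Rightarrow> nat \<Rightarrow> monomial \<Rightarrow> bool" where
  "mon_balanced a0 k M \<longleftrightarrow>
     (\<Sum>i\<in>UNIV. mon_pdeg M i) \<le> mon_endeg M \<and>
     2 * mon_exp M + mon_weight M = 2 * a0 - real k \<and> mon_weight M \<le> real k \<and>
     (mon_exp M \<le> a0 - 1 \<or> mon_endeg M = 0 \<and> mon_exp M = a0)"

definition admissible :: "real \<Rightarrow> nat \<Rightarrow> monomial \<Rightarrow> bool" where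
  "admissible a0 k M \<longleftrightarrow> mon_coeff_bounded M \<and> mon_balanced a0 k M"

lemma mon_coeff_boundedI:
  assumes "0 \<le> \<kappa>" "\<And>c q. \<bar>f c q\<bar> \<le> \<kappa> * en c q ^ nq"
  shows "mon_coeff_bounded (Monomial f nq a m n)"
  using assms unfolding mon_coeff_bounded_def by auto

lemma mon_coeff_bounded_mon_deriv:
  assumes "mon_coeff_bounded M" and "M' \<in> set (mon_deriv j M)"
  shows "mon_coeff_bounded M'"
proof (cases M)
  case (Monomial f nq a m n)
  obtain \<kappa> where \<kappa>: "0 \<le> \<kappa>" "\<And>c q. \<bar>f c q\<bar> \<le> \<kappa> * en c q ^ nq"
    using assms(1) unfolding mon_coeff_bounded_def Monomial by auto
  have en_q: "0 \<le> en c q" "\<bar>q$j\<bar> \<le> en c q" for c q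
    using abs_le_en[of c q] abs_component_le_en[of q j c] by auto
  have f_en: "\<bar>f c q\<bar> * en c q \<le> \<kappa> * en c q ^ Suc nq" for c q
    using mult_right_mono[OF \<kappa>(2) en_q(1)] by (simp add: algebra_simps)
  from assms(2)[unfolded Monomial] show ?thesis
  proof (cases rule: mon_deriv_cases)
    case 1
    show ?thesis
      unfolding 1
    proof (rule mon_coeff_boundedI)
      show "\<bar>a * f c q * en c q\<bar> \<le> \<bar>a\<bar> * \<kappa> * en c q ^ Suc nq" for c q
        using mult_left_mono[OF f_en[of c q] abs_ge_zero[of a]] en_q(1)[of c q]
        by (simp add: abs_mult mult.assoc)
    qed (use \<kappa> in simp)
  next
    case 2
    show ?thesis
      unfolding 2
    proof (rule mon_coeff_boundedI)
      show "\<bar>- a * f c q * q$j\<bar> \<le> \<bar>a\<bar> * \<kappa> * en c q ^ Suc nq" for c q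
        using mult_left_mono[OF en_q(2)[where c = c and q = q] abs_ge_zero[of "a * f c q"]]
          mult_left_mono[OF f_en[of c q] abs_ge_zero[of a]]
        by (simp add: abs_mult mult.assoc)
    qed (use \<kappa> in simp)
  next
    case 3
    show ?thesis
      unfolding 3(2)
      using \<kappa> mult_left_mono[OF \<kappa>(2) abs_ge_zero[of "real m"]]
      by (intro mon_coeff_boundedI[of "real m * \<kappa>"]) (auto simp: abs_mult mult.assoc)
  next
    case 4
    show ?thesis
      unfolding 4(2)
      using \<kappa> mult_left_mono[OF \<kappa>(2) abs_ge_zero[of "real (n j)"]]
      by (intro mon_coeff_boundedI[of "real (n j) * \<kappa>"]) (auto simp: abs_mult mult.assoc)
  qed
qed

lemma mon_balanced_mon_deriv:
  assumes "mon_balanced a0 k M" and "M' \<in> set (mon_deriv j M)"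
  shows "mon_balanced a0 (Suc k) M'"
proof (cases M)
  case (Monomial f nq a m n)
  define s where "s = (\<Sum>i\<in>UNIV. n i)"
  have bal: "s \<le> m" "2 * a + (real nq + real s - real m) = 2 * a0 - real k"
    "real nq + real s - real m \<le> real k" "a \<le> a0 - 1 \<or> m = 0 \<and> a = a0"
    using assms(1) unfolding mon_balanced_def mon_weight_def Monomial s_def by auto
  have "n j \<le> s"
    unfolding s_def by (rule member_le_sum) auto
  then have s_Suc: "(\<Sum>i\<in>UNIV. (n(j := Suc (n j))) i) = Suc s"
    and s_pred: "0 < n j \<Longrightarrow> (\<Sum>i\<in>UNIV. (n(j := n j - 1)) i) = s - 1"
    using sum_fun_upd_UNIV[of n j "Suc (n j)"] sum_fun_upd_UNIV[of n j "n j - 1"]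
    unfolding s_def by linarith+
  from assms(2)[unfolded Monomial] show ?thesis
  proof (cases rule: mon_deriv_cases)
    case 1
    show ?thesis
      using bal unfolding 1 mon_balanced_def mon_weight_def monomial.sel s_Suc by auto
  next
    case 2
    show ?thesis
      using bal unfolding 2 mon_balanced_def mon_weight_def monomial.sel s_def[symmetric] by auto
  next
    case 3
    show ?thesis
      using bal 3(1) unfolding 3(2) mon_balanced_def mon_weight_def monomial.sel s_Suc by auto
  next
    case 4
    show ?thesis
      using bal \<open>n j \<le> s\<close> 4(1) unfolding 4(2) mon_balanced_def mon_weight_def monomial.sel s_pred[OF
        4(1)[unfolded neq0_conv]] by (auto simp: of_nat_diff)
  qed
qed

lemma admissible_mon_deriv:
  "admissible a0 k M \<Longrightarrow> M' \<in> set (mon_deriv j M) \<Longrightarrow> admissible a0 (Suc k) M'"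
  unfolding admissible_def using mon_coeff_bounded_mon_deriv mon_balanced_mon_deriv by blast

lemma admissible_poly_deriv_iter:
  assumes "\<forall>M\<in>set L. admissible a0 k M"
  shows "\<forall>M\<in>set ((poly_deriv j ^^ n) L). admissible a0 (k + n) M"
proof (induction n)
  case 0
  then show ?case
    using assms by simp
next
  case (Suc n)
  then show ?case
    using admissible_mon_deriv by (fastforce simp: poly_deriv_def)
qed

lemma admissible_poly_pD:
  assumes "\<forall>M\<in>set L. admissible a0 0 M"
  shows "\<forall>M\<in>set (poly_pD \<beta> L). admissible a0 (mi_abs \<beta>) M"
proof -
  have "mi_abs \<beta> = 0 + \<beta>$3 + \<beta>$2 + \<beta>$1"
    unfolding mi_abs_def sum_3 by simp
  then show ?thesis
    unfolding poly_pD_def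
    using admissible_poly_deriv_iter[OF admissible_poly_deriv_iter[OF
        admissible_poly_deriv_iter[OF assms]]] by metis
qed

lemma mon_balanced_exp_le:
  assumes "mon_balanced a0 k M" "1 \<le> k"
  shows "mon_exp M \<le> a0 - 1"
  using assms unfolding mon_balanced_def mon_weight_def by auto

section \<open>Monomial bounds for large p\<close>

lemma c_powr_mult_en_powr_le:
  assumes "1 \<le> c" "Y + E \<le> 0" "E \<le> real k"
  shows "c powr Y * en c q powr E \<le> jbr q ^ k"
proof (cases "0 \<le> E")
  case True
  have "c powr Y * en c q powr E \<le> c powr Y * (c * jbr q) powr E"
    using True assms(1) abs_le_en[of c q] en_le_mult_jbr[OF assms(1)]
    by (intro mult_left_mono powr_mono2) auto
  also have "\<dots> = c powr (Y + E) * jbr q powr E"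
    using assms(1) jbr_ge_1[of q] by (simp add: powr_mult powr_add)
  also have "\<dots> \<le> 1 * jbr q powr real k"
    using powr_mono[of "Y + E" 0 c] assms jbr_ge_1[of q] by (intro mult_mono powr_mono) auto
  finally show ?thesis
    using jbr_ge_1[of q] by (simp add: powr_realpow)
next
  case False
  have "c powr Y * en c q powr E \<le> c powr Y * c powr E"
    using False assms(1) abs_le_en[of c q] by (intro mult_left_mono powr_mono2') auto
  also have "\<dots> \<le> 1"
    using powr_mono[of "Y + E" 0 c] assms(1,2) by (simp add: powr_add[symmetric])
  also have "\<dots> \<le> jbr q ^ k"
    using jbr_ge_1[of q] by simp
  finally show ?thesis .
qed

lemma powr_mult_powr_le:
  fixes G F L :: real
  assumes "0 < L" "L \<le> F" "F \<le> G" "0 \<le> s" "a + s \<le> 0"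
  shows "G powr a * F powr s \<le> L powr (a + s)"
proof -
  have "G powr a * F powr s \<le> G powr a * G powr s"
    using assms by (intro mult_left_mono powr_mono2) auto
  also have "\<dots> = G powr (a + s)"
    by (simp add: powr_add)
  also have "\<dots> \<le> L powr (a + s)"
    using assms by (intro powr_mono2') auto
  finally show ?thesis .
qed

lemma abs_pmon_div_power_le:
  assumes "0 < r" "r \<le> R" "norm p \<le> R" "(\<Sum>i\<in>UNIV. n i) \<le> m"
  shows "\<bar>pmon n p\<bar> / R ^ m \<le> r powr (real (\<Sum>i\<in>UNIV. n i) - real m)"
proof -
  have R: "0 < R"
    using assms(1,2) by simp
  have "\<bar>pmon n p\<bar> / R ^ m \<le> R ^ (\<Sum>i\<in>UNIV. n i) / R ^ m"
    using order_trans[OF abs_pmon_le[of n p] power_mono[OF assms(3) norm_ge_zero]] R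
    by (intro divide_right_mono) auto
  also have "\<dots> = R powr (real (\<Sum>i\<in>UNIV. n i) - real m)"
    using R by (simp add: powr_diff powr_realpow del: of_nat_sum)
  also have "\<dots> \<le> r powr (real (\<Sum>i\<in>UNIV. n i) - real m)"
    using assms by (intro powr_mono2') (auto simp del: of_nat_sum)
  finally show ?thesis .
qed

lemma mon_eval_bound:
  assumes c: "1 \<le> c" and d: "- c\<^sup>2 \<le> d" and p: "3/2 * en c q \<le> norm p" and s: "0 \<le> s"
    and coeff: "\<bar>mon_coeff M c q\<bar> \<le> \<kappa> * en c q ^ mon_qdeg M"
    and pdeg: "(\<Sum>i\<in>UNIV. mon_pdeg M i) \<le> mon_endeg M"
    and exp: "mon_exp M + s \<le> 0" "2 * (mon_exp M + s) + mon_weight M \<le> 0"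
    and weight: "mon_weight M \<le> real k"
  shows "\<bar>mon_eval c d q M p\<bar> * (mink c p q - c\<^sup>2) powr s
           \<le> \<kappa> * 50 powr (- (mon_exp M + s)) * jbr q ^ k"
proof -
  define X where "X = mon_exp M + s"
  define G where "G = mink c p q + d"
  define F where "F = mink c p q - c\<^sup>2"
  have c2: "0 < c\<^sup>2 / 50"
    using c by simp
  have F: "c\<^sup>2 / 50 \<le> F" "F \<le> G"
    using mink_lower_bound[OF p] d unfolding F_def G_def by auto
  have en_q: "0 < en c q" "en c q \<le> en c p"
    using en_pos[of c q] c p norm_le_en[of p c] abs_le_en[of c q] by auto
  have G_part: "G powr mon_exp M * F powr s \<le> 50 powr (- X) * c powr (2 * X)"
  proof -
    have "G powr mon_exp M * F powr s \<le> (c\<^sup>2 / 50) powr X"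
      unfolding X_def using c2 F s exp(1) by (rule powr_mult_powr_le)
    also have "\<dots> = 50 powr (- X) * c powr (2 * X)"
    proof -
      have "(c\<^sup>2) powr X = c powr (2 * X)"
        using c by (simp add: powr_powr[symmetric] powr_numeral)
      then show ?thesis
        using c by (simp add: powr_divide powr_minus_divide)
    qed
    finally show ?thesis .
  qed
  have p_part: "\<bar>pmon (mon_pdeg M) p\<bar> / en c p ^ mon_endeg M
      \<le> en c q powr (real (\<Sum>i\<in>UNIV. mon_pdeg M i) - real (mon_endeg M))"
    using en_q norm_le_en pdeg by (rule abs_pmon_div_power_le)
  have coeff': "\<bar>mon_coeff M c q\<bar> \<le> \<kappa> * en c q powr real (mon_qdeg M)"
    using coeff en_q(1) by (simp add: powr_realpow)
  have "\<bar>mon_eval c d q M p\<bar> * F powr s = \<bar>mon_coeff M c q\<bar> * (G powr mon_exp M * F powr s)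
      * (\<bar>pmon (mon_pdeg M) p\<bar> / en c p ^ mon_endeg M)"
    using en_pos[of c p] c unfolding mon_eval_def G_def by (simp add: abs_mult)
  also have "\<dots> \<le> \<kappa> * en c q powr real (mon_qdeg M) * (50 powr (- X) * c powr (2 * X))
      * en c q powr (real (\<Sum>i\<in>UNIV. mon_pdeg M i) - real (mon_endeg M))"
    using order_trans[OF abs_ge_zero coeff'] en_q
    by (intro mult_mono[OF mult_mono[OF coeff' G_part] p_part]) auto
  also have "\<dots> = \<kappa> * 50 powr (- X) * (c powr (2 * X) * en c q powr mon_weight M)"
    unfolding mon_weight_def by (simp add: powr_add[symmetric] algebra_simps)
  also have "\<dots> \<le> \<kappa> * 50 powr (- X) * jbr q ^ k"
    using c exp(2) weight order_trans[OF abs_ge_zero coeff'] en_q(1) unfolding X_def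
    by (intro mult_left_mono c_powr_mult_en_powr_le) (auto simp: zero_le_mult_iff)
  finally show ?thesis
    unfolding F_def X_def .
qed

lemma poly_eval_bound:
  assumes adm: "\<forall>M\<in>set L. admissible a0 k M" and k: "1 \<le> k"
    and s: "0 \<le> s" "a0 + s \<le> 1/2"
  shows "\<exists>K. \<forall>c d p q. 1 \<le> c \<and> - c\<^sup>2 \<le> d \<and> 3/2 * en c q \<le> norm p \<longrightarrow>
           \<bar>poly_eval c d q L p\<bar> * (mink c p q - c\<^sup>2) powr s \<le> K * jbr q ^ k"
  using adm
proof (induction L)
  case Nil
  show ?case
    by (auto simp: poly_eval_def intro: exI[of _ 0])
next
  case (Cons M L)
  obtain K where K: "\<forall>c d p q. 1 \<le> c \<and> - c\<^sup>2 \<le> d \<and> 3/2 * en c q \<le> norm p \<longrightarrow>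
      \<bar>poly_eval c d q L p\<bar> * (mink c p q - c\<^sup>2) powr s \<le> K * jbr q ^ k"
    using Cons by auto
  have M: "admissible a0 k M"
    using Cons.prems by simp
  then obtain \<kappa> where \<kappa>: "0 \<le> \<kappa>" "\<forall>c q. \<bar>mon_coeff M c q\<bar> \<le> \<kappa> * en c q ^ mon_qdeg M"
    unfolding admissible_def mon_coeff_bounded_def by blast
  have M_bal: "mon_balanced a0 k M"
    using M unfolding admissible_def by simp
  have M_exp: "mon_exp M + s \<le> 0" "2 * (mon_exp M + s) + mon_weight M \<le> 0"
    using M_bal mon_balanced_exp_le[OF M_bal k] s k unfolding mon_balanced_def by auto
  show ?case
  proof (intro exI allI impI)
    fix c d :: real and p q :: "real^3"
    assume H: "1 \<le> c \<and> - c\<^sup>2 \<le> d \<and> 3/2 * en c q \<le> norm p"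
    have "\<bar>poly_eval c d q (M # L) p\<bar> * (mink c p q - c\<^sup>2) powr s
        \<le> \<bar>mon_eval c d q M p\<bar> * (mink c p q - c\<^sup>2) powr s
          + \<bar>poly_eval c d q L p\<bar> * (mink c p q - c\<^sup>2) powr s"
      unfolding distrib_right[symmetric] by (simp add: poly_eval_def mult_right_mono abs_triangle_ineq)
    also have "\<dots> \<le> \<kappa> * 50 powr (- (mon_exp M + s)) * jbr q ^ k + K * jbr q ^ k"
      using mon_eval_bound[of c d q p s M \<kappa>] H s \<kappa> M_exp K M_bal unfolding mon_balanced_def
      by (intro add_mono) auto
    finally show "\<bar>poly_eval c d q (M # L) p\<bar> * (mink c p q - c\<^sup>2) powr s
        \<le> (\<kappa> * 50 powr (- (mon_exp M + s)) + K) * jbr q ^ k"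
      by (simp add: distrib_right)
  qed
qed

section \<open>Derivatives of powers of the Minkowski product\<close>

lemma mi_abs_pos:
  assumes "\<beta> \<noteq> 0"
  shows "0 < mi_abs \<beta>"
proof -
  obtain i where "\<beta>$i \<noteq> 0"
    using assms by (auto simp: vec_eq_iff)
  moreover have "\<beta>$i \<le> mi_abs \<beta>"
    unfolding mi_abs_def by (rule member_le_sum) auto
  ultimately show ?thesis
    by simp
qed

lemma pD_mink_powr_bound:
  assumes "\<beta> \<noteq> 0" "0 \<le> s" "a + s \<le> 1/2"
  shows "\<exists>C. \<forall>c d p q. 1 \<le> c \<and> - c\<^sup>2 \<le> d \<and> 3/2 * en c q \<le> norm p \<longrightarrow>
           \<bar>pD \<beta> (\<lambda>x. \<kappa> * (mink c x q + d) powr a) p\<bar> * (mink c p q - c\<^sup>2) powr s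
             \<le> C * jbr q ^ mi_abs \<beta>"
proof -
  define L where "L = [Monomial (\<lambda>_ _. \<kappa>) 0 a 0 (\<lambda>_. 0)]"
  have L: "poly_eval c d q L = (\<lambda>x. \<kappa> * (mink c x q + d) powr a)" for c d q
    by (simp add: fun_eq_iff L_def poly_eval_def mon_eval_def pmon_def)
  have "\<forall>M\<in>set L. admissible a 0 M"
    by (auto simp: L_def admissible_def mon_balanced_def mon_weight_def mon_coeff_bounded_def
        intro: exI[of _ "\<bar>\<kappa>\<bar>"])
  then have adm: "\<forall>M\<in>set (poly_pD \<beta> L). admissible a (mi_abs \<beta>) M"
    by (rule admissible_poly_pD)
  have k: "1 \<le> mi_abs \<beta>"
    using mi_abs_pos[OF assms(1)] by simp
  obtain C where C: "\<forall>c d p q. 1 \<le> c \<and> - c\<^sup>2 \<le> d \<and> 3/2 * en c q \<le> norm p \<longrightarrow>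
      \<bar>poly_eval c d q (poly_pD \<beta> L) p\<bar> * (mink c p q - c\<^sup>2) powr s \<le> C * jbr q ^ mi_abs \<beta>"
    using poly_eval_bound[OF adm k assms(2,3)] by blast
  have "pD \<beta> (\<lambda>x. \<kappa> * (mink c x q + d) powr a) p = poly_eval c d q (poly_pD \<beta> L) p"
    if "1 \<le> c" "- c\<^sup>2 \<le> d" "3/2 * en c q \<le> norm p" for c d p q
    using pD_poly_eval[of c p q d \<beta> L] mink_sub_c2_pos[of c q p] that by (simp add: L)
  with C show ?thesis
    by auto
qed

lemma pD_sqrt_mink_bound:
  assumes "\<beta> \<noteq> 0"
  shows "\<exists>C. \<forall>c d p q. 1 \<le> c \<and> - c\<^sup>2 \<le> d \<and> 3/2 * en c q \<le> norm p \<longrightarrow>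
           \<bar>pD \<beta> (\<lambda>x. sqrt (2 * (mink c x q + d))) p\<bar> \<le> C * jbr q ^ mi_abs \<beta>"
proof -
  obtain C where C: "\<forall>c d p q. 1 \<le> c \<and> - c\<^sup>2 \<le> d \<and> 3/2 * en c q \<le> norm p \<longrightarrow>
      \<bar>pD \<beta> (\<lambda>x. sqrt 2 * (mink c x q + d) powr (1/2)) p\<bar> * (mink c p q - c\<^sup>2) powr 0
        \<le> C * jbr q ^ mi_abs \<beta>"
    using pD_mink_powr_bound[OF assms, where s = 0 and a = "1/2" and \<kappa> = "sqrt 2"] by auto
  show ?thesis
  proof (intro exI allI impI)
    fix c d :: real and p q :: "real^3"
    assume H: "1 \<le> c \<and> - c\<^sup>2 \<le> d \<and> 3/2 * en c q \<le> norm p"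
    then have F: "0 < mink c p q - c\<^sup>2"
      by (intro mink_sub_c2_pos) auto
    then have "p \<in> {x. 0 < mink c x q + d}"
      using H by auto
    then have "pD \<beta> (\<lambda>x. sqrt (2 * (mink c x q + d))) p
        = pD \<beta> (\<lambda>x. sqrt 2 * (mink c x q + d) powr (1/2)) p"
      by (rule pD_cong_open[OF open_mink_gt]) (auto simp: powr_half_sqrt real_sqrt_mult[symmetric])
    with C[rule_format, where c = c and d = d and p = p and q = q] H F
    show "\<bar>pD \<beta> (\<lambda>x. sqrt (2 * (mink c x q + d))) p\<bar> \<le> C * jbr q ^ mi_abs \<beta>"
      by simp
  qed
qed

lemma pD_inv_sqrt_mink_bound:
  assumes "\<beta> \<noteq> 0"
  shows "\<exists>C. \<forall>c d p q. 1 \<le> c \<and> - c\<^sup>2 \<le> d \<and> 3/2 * en c q \<le> norm p \<longrightarrow>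
           \<bar>pD \<beta> (\<lambda>x. 1 / sqrt (2 * (mink c x q + d))) p\<bar>
             \<le> C * jbr q ^ mi_abs \<beta> / (mand_g c p q)\<^sup>2"
proof -
  obtain C where C: "\<forall>c d p q. 1 \<le> c \<and> - c\<^sup>2 \<le> d \<and> 3/2 * en c q \<le> norm p \<longrightarrow>
      \<bar>pD \<beta> (\<lambda>x. 1 / sqrt 2 * (mink c x q + d) powr (- 1/2)) p\<bar> * (mink c p q - c\<^sup>2) powr 1
        \<le> C * jbr q ^ mi_abs \<beta>"
    using pD_mink_powr_bound[OF assms, where s = 1 and a = "- 1/2" and \<kappa> = "1 / sqrt 2"] by auto
  show ?thesis
  proof (intro exI[of _ "2 * C"] allI impI)
    fix c d :: real and p q :: "real^3"
    assume H: "1 \<le> c \<and> - c\<^sup>2 \<le> d \<and> 3/2 * en c q \<le> norm p"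
    define F where "F = mink c p q - c\<^sup>2"
    have F: "0 < F"
      using H unfolding F_def by (intro mink_sub_c2_pos) auto
    then have "p \<in> {x. 0 < mink c x q + d}"
      using H unfolding F_def by auto
    then have "pD \<beta> (\<lambda>x. 1 / sqrt (2 * (mink c x q + d))) p
        = pD \<beta> (\<lambda>x. 1 / sqrt 2 * (mink c x q + d) powr (- 1/2)) p"
      by (rule pD_cong_open[OF open_mink_gt])
        (auto simp: powr_minus_divide powr_half_sqrt real_sqrt_mult[symmetric])
    moreover have "(mand_g c p q)\<^sup>2 = 2 * F"
      using F unfolding F_def by (intro mand_g_power2) simp
    ultimately show "\<bar>pD \<beta> (\<lambda>x. 1 / sqrt (2 * (mink c x q + d))) p\<bar>
        \<le> 2 * C * jbr q ^ mi_abs \<beta> / (mand_g c p q)\<^sup>2"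
      using C[rule_format, where c = c and d = d and p = p and q = q] H F
      by (simp add: F_def[symmetric] pos_le_divide_eq)
  qed
qed

lemma pD_sqrt_and_inv_sqrt_mink_bound:
  assumes "\<beta> \<noteq> 0"
  shows "\<exists>C. \<forall>c d p q. 1 \<le> c \<and> - c\<^sup>2 \<le> d \<and> 3/2 * en c q \<le> norm p \<longrightarrow>
           \<bar>pD \<beta> (\<lambda>x. sqrt (2 * (mink c x q + d))) p\<bar> \<le> C * jbr q ^ mi_abs \<beta> \<and>
           \<bar>pD \<beta> (\<lambda>x. 1 / sqrt (2 * (mink c x q + d))) p\<bar>
             \<le> C * jbr q ^ mi_abs \<beta> / (mand_g c p q)\<^sup>2"
proof -
  obtain C1 C2 where
    C1: "\<forall>c d p q. 1 \<le> c \<and> - c\<^sup>2 \<le> d \<and> 3/2 * en c q \<le> norm p \<longrightarrow>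
      \<bar>pD \<beta> (\<lambda>x. sqrt (2 * (mink c x q + d))) p\<bar> \<le> C1 * jbr q ^ mi_abs \<beta>" and
    C2: "\<forall>c d p q. 1 \<le> c \<and> - c\<^sup>2 \<le> d \<and> 3/2 * en c q \<le> norm p \<longrightarrow>
      \<bar>pD \<beta> (\<lambda>x. 1 / sqrt (2 * (mink c x q + d))) p\<bar>
        \<le> C2 * jbr q ^ mi_abs \<beta> / (mand_g c p q)\<^sup>2"
    using pD_sqrt_mink_bound[OF assms] pD_inv_sqrt_mink_bound[OF assms] by blast
  show ?thesis
  proof (intro exI[of _ "max C1 C2"] allI impI conjI)
    fix c d :: real and p q :: "real^3"
    assume H: "1 \<le> c \<and> - c\<^sup>2 \<le> d \<and> 3/2 * en c q \<le> norm p"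
    have J: "0 \<le> jbr q ^ mi_abs \<beta>"
      using jbr_ge_1[of q] by simp
    show "\<bar>pD \<beta> (\<lambda>x. sqrt (2 * (mink c x q + d))) p\<bar> \<le> max C1 C2 * jbr q ^ mi_abs \<beta>"
      using C1[rule_format, OF H] mult_right_mono[OF max.cobounded1[of C1 C2] J] by linarith
    show "\<bar>pD \<beta> (\<lambda>x. 1 / sqrt (2 * (mink c x q + d))) p\<bar>
        \<le> max C1 C2 * jbr q ^ mi_abs \<beta> / (mand_g c p q)\<^sup>2"
      using C2[rule_format, OF H]
        divide_right_mono[OF mult_right_mono[OF max.cobounded2[of C2 C1] J]
          zero_le_power2[of "mand_g c p q"]]
      by linarith
  qed
qed

theorem lemmaA4:
  fixes \<beta> :: "nat^3"
  assumes "\<beta> \<noteq> 0"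
  shows "\<exists>C. \<forall>c p q. c \<ge> 1 \<and> norm p \<ge> 3/2 * en c q \<longrightarrow>
      \<bar>pD \<beta> (\<lambda>p'. mand_g c p' q) p\<bar> \<le> C * jbr q ^ mi_abs \<beta>
    \<and> \<bar>pD \<beta> (\<lambda>p'. 1 / mand_g c p' q) p\<bar> \<le> C * jbr q ^ mi_abs \<beta> / (mand_g c p q)\<^sup>2
    \<and> \<bar>pD \<beta> (\<lambda>p'. sqrt (mand_s c p' q)) p\<bar> \<le> C * jbr q ^ mi_abs \<beta>
    \<and> \<bar>pD \<beta> (\<lambda>p'. 1 / sqrt (mand_s c p' q)) p\<bar> \<le> C * jbr q ^ mi_abs \<beta> / (mand_g c p q)\<^sup>2"
proof -
  obtain C where C: "\<forall>c d p q. 1 \<le> c \<and> - c\<^sup>2 \<le> d \<and> 3/2 * en c q \<le> norm p \<longrightarrow>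
      \<bar>pD \<beta> (\<lambda>x. sqrt (2 * (mink c x q + d))) p\<bar> \<le> C * jbr q ^ mi_abs \<beta> \<and>
      \<bar>pD \<beta> (\<lambda>x. 1 / sqrt (2 * (mink c x q + d))) p\<bar>
        \<le> C * jbr q ^ mi_abs \<beta> / (mand_g c p q)\<^sup>2"
    using pD_sqrt_and_inv_sqrt_mink_bound[OF assms] by blast
  show ?thesis
  proof (intro exI[of _ C] allI impI)
    fix c :: real and p q :: "real^3"
    assume H: "c \<ge> 1 \<and> norm p \<ge> 3/2 * en c q"
    have "- c\<^sup>2 \<le> - c\<^sup>2" "- c\<^sup>2 \<le> c\<^sup>2"
      by simp_all
    with H C[rule_format, where c = c and d = "- c\<^sup>2" and p = p and q = q]
      C[rule_format, where c = c and d = "c\<^sup>2" and p = p and q = q]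
    show "\<bar>pD \<beta> (\<lambda>p'. mand_g c p' q) p\<bar> \<le> C * jbr q ^ mi_abs \<beta>
      \<and> \<bar>pD \<beta> (\<lambda>p'. 1 / mand_g c p' q) p\<bar> \<le> C * jbr q ^ mi_abs \<beta> / (mand_g c p q)\<^sup>2
      \<and> \<bar>pD \<beta> (\<lambda>p'. sqrt (mand_s c p' q)) p\<bar> \<le> C * jbr q ^ mi_abs \<beta>
      \<and> \<bar>pD \<beta> (\<lambda>p'. 1 / sqrt (mand_s c p' q)) p\<bar> \<le> C * jbr q ^ mi_abs \<beta> / (mand_g c p q)\<^sup>2"
      unfolding mand_g_eq_mink[symmetric] mand_s_eq_mink by simp
  qed
qed

end
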